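(* Suppose $\widehat Z^\natural$ satisfies the average case incoherence condition with parameter $\mu_0$. Then for any two pairs $(j,k),(\alpha,\beta)\in[d]\times[n]$, $$\sqrt{\frac{w_k}{w_\beta}}\,\big|\langle\mathcal P_{\widehat T}(\widehat G_{j,k}),\widehat G_{\alpha,\beta}\rangle\big|\le\frac{3\mu_0 r}{n}.$$
   Context: Let $d\ge1$, $n$ odd, $n_1=n_2=(n+1)/2$. For $a\in[n]$, $w_a=\#\{(j,k)\in[n_1]\times[n_2]:j+k=a+1\}$, $G_a=w_a^{-1/2}\sum_{j+k=a+1}e_je_k^{\mathsf T}$. $F$ is the $d\times d$ unitary DFT matrix, $F_{ij}=d^{-1/2}e^{-2\pi\mathrm i(i-1)(j-1)/d}$. $\widehat G_{j,k}=\mathrm{diag}(F_{1j}G_k,\dots,F_{dj}G_k)$. Inner product $\langle A,B\rangle=\mathrm{tr}(AB^{\mathsf H})$. $\widehat Z^\natural=\mathrm{diag}(\widehat Z^\natural_a)$ with each block of rank $r$ and compact SVD $\widehat U_a\widehat\Sigma_a\widehat V_a^{\mathsf H}$; $\mathcal P_{\widehat T}$ acts blockwise on block diagonal matrices by $W_a\mapsto\widehat U_a\widehat U_a^{\mathsf H}W_a+W_a\widehat V_a\widehat V_a^{\mathsf H}-\widehat U_a\widehat U_a^{\mathsf H}W_a\widehat V_a\widehat V_a^{\mathsf H}$. Average case incoherence with parameter $\mu_0$: $\max_i\frac1d\sum_a\|e_i^{\mathsf T}\widehat U_a\|_2^2\le\mu_0r/n$ and $\max_j\frac1d\sum_a\|e_j^{\mathsf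 T}\widehat V_a\|_2^2\le\mu_0r/n$. *)

theory Defs
  imports "HOL-Analysis.Analysis"
begin

text \<open>Matrices are functions nat => nat => complex, indexed from 1, with the
  dimensions given explicitly. Block-diagonal matrices diag(W_1,...,W_d) are
  represented by their family of blocks a => W_a.\<close>

type_synonym cmat = "nat \<Rightarrow> nat \<Rightarrow> complex"
type_synonym bdmat = "nat \<Rightarrow> cmat"

definition half :: "nat \<Rightarrow> nat" where
  "half n = (n + 1) div 2"

definition wt :: "nat \<Rightarrow> nat \<Rightarrow> nat" where
  "wt n a = card {(j, k). j \<in> {1..half n} \<and> k \<in> {1..half n} \<and> j + k = a + 1}"

definition Gmat :: "nat \<Rightarrow> nat \<Rightarrow> cmat" where
  "Gmat n a = (\<lambda>i l. if i \<in> {1..half n} \<and> l \<in> {1..half n} \<and> i + l = a + 1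
                      then complex_of_real (1 / sqrt (real (wt n a))) else 0)"

definition DFT :: "nat \<Rightarrow> nat \<Rightarrow> nat \<Rightarrow> complex" where
  "DFT d i j = exp (- 2 * complex_of_real pi * \<i> * of_nat ((i - 1) * (j - 1)) / of_nat d)
               / complex_of_real (sqrt (real d))"

definition Ghat :: "nat \<Rightarrow> nat \<Rightarrow> nat \<Rightarrow> nat \<Rightarrow> bdmat" where
  "Ghat d n j k = (\<lambda>a i l. DFT d a j * Gmat n k i l)"

definition mmul :: "nat \<Rightarrow> cmat \<Rightarrow> cmat \<Rightarrow> cmat" where
  "mmul m A B = (\<lambda>i l. \<Sum>t = 1..m. A i t * B t l)"

definition adj :: "cmat \<Rightarrow> cmat" where
  "adj A = (\<lambda>i l. cnj (A l i))"

definition PT :: "nat \<Rightarrow> nat \<Rightarrow> nat \<Rightarrow> bdmat \<Rightarrow> bdmat \<Rightarrow> bdmat \<Rightarrow> bdmat" where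
  "PT n1 n2 r U V W = (\<lambda>a.
     let PU = mmul r (U a) (adj (U a)); PV = mmul r (V a) (adj (V a)) in
     (\<lambda>i l. mmul n1 PU (W a) i l + mmul n2 (W a) PV i l
            - mmul n2 (mmul n1 PU (W a)) PV i l))"

definition inner_bd :: "nat \<Rightarrow> nat \<Rightarrow> nat \<Rightarrow> bdmat \<Rightarrow> bdmat \<Rightarrow> complex" where
  "inner_bd d n1 n2 A B = (\<Sum>a = 1..d. \<Sum>i = 1..n1. \<Sum>l = 1..n2. A a i l * cnj (B a i l))"

end

theory Submission imports Defs begin

text \<open>Blockwise, Ghat(j,k) is a DFT phase of modulus d^(-1/2) times the anti-diagonal
  indicator E_k scaled by w_k^(-1/2); so the phases drop out and it suffices to bound, for each
  entry (i,l) in the support of E_beta, the sum over the blocks of the entries of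
  U U^H E_k + E_k V V^H - U U^H E_k V V^H. Since E_k has at most one 1 in every row and column,
  the entries of the two one-sided terms are bounded by |(U U^H)(i,i')| <= (rho i + rho i')/2,
  rho being the squared row norms, and the two-sided term by AM-GM together with the fact that
  a row of an orthogonal projector has squared norm equal to its diagonal entry. Averaged over
  the blocks, incoherence bounds each of the three terms by mu0 r/n; summing over the w_beta
  entries of the support cancels the normalisation.\<close>

definition row_norm_sq :: "nat \<Rightarrow> cmat \<Rightarrow> nat \<Rightarrow> real" where
  "row_norm_sq r X i = (\<Sum>t = 1..r. (cmod (X i t))\<^sup>2)"

definition orthonormal_cols :: "nat \<Rightarrow> nat \<Rightarrow> cmat \<Rightarrow> bool" where
  "orthonormal_cols m r X \<longleftrightarrow> (\<forall>s \<in> {1..r}. \<forall>t \<in> {1..r}.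
     (\<Sum>i = 1..m. cnj (X i s) * X i t) = (if s = t then 1 else 0))"

definition doubly_substochastic :: "nat \<Rightarrow> nat \<Rightarrow> (nat \<Rightarrow> nat \<Rightarrow> real) \<Rightarrow> bool" where
  "doubly_substochastic m n E \<longleftrightarrow> (\<forall>i l. 0 \<le> E i l)
     \<and> (\<forall>l. (\<Sum>i = 1..m. E i l) \<le> 1) \<and> (\<forall>i. (\<Sum>l = 1..n. E i l) \<le> 1)"

lemma row_norm_sq_nonneg: "0 \<le> row_norm_sq r X i"
  unfolding row_norm_sq_def by (intro sum_nonneg) auto

lemma mult_le_half_sum_squares: "(a::real) * b \<le> (a\<^sup>2 + b\<^sup>2) / 2"
proof -
  have "0 \<le> (a - b)\<^sup>2" by simp
  thus ?thesis by (simp add: power2_eq_square algebra_simps)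
qed

lemma proj_entry: "mmul r X (adj X) i i' = (\<Sum>t = 1..r. X i t * cnj (X i' t))"
  by (simp add: mmul_def adj_def)

lemma norm_proj_entry_le:
  "cmod (mmul r X (adj X) i i') \<le> (row_norm_sq r X i + row_norm_sq r X i') / 2"
proof -
  have "cmod (mmul r X (adj X) i i') \<le> (\<Sum>t = 1..r. cmod (X i t) * cmod (X i' t))"
    unfolding proj_entry by (rule order_trans[OF norm_sum]) (simp add: norm_mult)
  also have "\<dots> \<le> (\<Sum>t = 1..r. ((cmod (X i t))\<^sup>2 + (cmod (X i' t))\<^sup>2) / 2)"
    by (intro sum_mono mult_le_half_sum_squares)
  also have "\<dots> = (row_norm_sq r X i + row_norm_sq r X i') / 2"
    by (simp only: row_norm_sq_def sum_divide_distrib[symmetric] sum.distrib)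
  finally show ?thesis .
qed

lemma norm_proj_entry_commute:
  "cmod (mmul r X (adj X) i' i) = cmod (mmul r X (adj X) i i')"
proof -
  have "mmul r X (adj X) i' i = cnj (mmul r X (adj X) i i')"
    by (simp add: proj_entry mult.commute)
  thus ?thesis by simp
qed

text \<open>With orthonormal columns X X^H is an orthogonal projector, so the squared norm of
  its i-th row equals its i-th diagonal entry.\<close>
lemma sum_norm_proj_row_sq:
  assumes "orthonormal_cols m r X"
  shows "(\<Sum>i' = 1..m. (cmod (mmul r X (adj X) i i'))\<^sup>2) = row_norm_sq r X i"
proof -
  have "complex_of_real (\<Sum>i' = 1..m. (cmod (mmul r X (adj X) i i'))\<^sup>2)
     = (\<Sum>i' = 1..m. \<Sum>t = 1..r. \<Sum>s = 1..r. (X i t * cnj (X i s)) * (cnj (X i' t) * X i' s))"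
    unfolding of_real_sum complex_norm_square proj_entry
    by (simp add: sum_distrib_left sum_distrib_right mult_ac)
  also have "\<dots> = (\<Sum>t = 1..r. \<Sum>s = 1..r. (X i t * cnj (X i s)) * (\<Sum>i' = 1..m. cnj (X i' t) * X i' s))"
  proof -
    have "(\<Sum>i' = 1..m. \<Sum>t = 1..r. \<Sum>s = 1..r. (X i t * cnj (X i s)) * (cnj (X i' t) * X i' s))
       = (\<Sum>t = 1..r. \<Sum>s = 1..r. \<Sum>i' = 1..m. (X i t * cnj (X i s)) * (cnj (X i' t) * X i' s))"
      by (subst sum.swap) (rule sum.cong[OF refl], rule sum.swap)
    thus ?thesis by (simp add: sum_distrib_left)
  qed
  also have "\<dots> = (\<Sum>t = 1..r. \<Sum>s = 1..r. (X i t * cnj (X i s)) * (if t = s then 1 else 0))"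
    using assms unfolding orthonormal_cols_def by (intro sum.cong refl) auto
  also have "\<dots> = (\<Sum>t = 1..r. X i t * cnj (X i t))"
    by (simp add: if_distrib cong: if_cong)
  also have "\<dots> = complex_of_real (row_norm_sq r X i)"
    unfolding row_norm_sq_def of_real_sum complex_norm_square ..
  finally show ?thesis using of_real_eq_iff by blast
qed

lemma sum_norm_proj_col_sq:
  assumes "orthonormal_cols m r X"
  shows "(\<Sum>i' = 1..m. (cmod (mmul r X (adj X) i' i))\<^sup>2) = row_norm_sq r X i"
  using sum_norm_proj_row_sq[OF assms, of i] by (simp add: norm_proj_entry_commute)

lemma doubly_substochastic_nonneg: "doubly_substochastic m n E \<Longrightarrow> 0 \<le> E i l"
  by (simp add: doubly_substochastic_def)

text \<open>A Schur test: AM-GM, with the row and column sums of E absorbing the weights.\<close>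
lemma doubly_substochastic_bilinear_le:
  assumes E: "doubly_substochastic m n E"
  shows "(\<Sum>l = 1..n. \<Sum>i = 1..m. E i l * (x i * y l))
         \<le> ((\<Sum>i = 1..m. (x i)\<^sup>2) + (\<Sum>l = 1..n. (y l)\<^sup>2)) / 2"
proof -
  have "(\<Sum>l = 1..n. \<Sum>i = 1..m. E i l * (x i * y l))
      \<le> (\<Sum>l = 1..n. \<Sum>i = 1..m. E i l * (((x i)\<^sup>2 + (y l)\<^sup>2) / 2))"
    by (intro sum_mono mult_left_mono mult_le_half_sum_squares doubly_substochastic_nonneg[OF E])
  also have "\<dots> = ((\<Sum>i = 1..m. (x i)\<^sup>2 * (\<Sum>l = 1..n. E i l))
                  + (\<Sum>l = 1..n. (y l)\<^sup>2 * (\<Sum>i = 1..m. E i l))) / 2"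
  proof -
    have "(\<Sum>l = 1..n. \<Sum>i = 1..m. E i l * (x i)\<^sup>2) = (\<Sum>i = 1..m. (x i)\<^sup>2 * (\<Sum>l = 1..n. E i l))"
      by (subst sum.swap) (simp add: sum_distrib_left mult.commute)
    moreover have "(\<Sum>l = 1..n. \<Sum>i = 1..m. E i l * (y l)\<^sup>2) = (\<Sum>l = 1..n. (y l)\<^sup>2 * (\<Sum>i = 1..m. E i l))"
      by (simp add: sum_distrib_left mult.commute)
    ultimately show ?thesis
      by (simp add: sum.distrib sum_divide_distrib[symmetric] distrib_left add_divide_distrib)
  qed
  also have "\<dots> \<le> ((\<Sum>i = 1..m. (x i)\<^sup>2) + (\<Sum>l = 1..n. (y l)\<^sup>2)) / 2"
    using E unfolding doubly_substochastic_def
    by (intro divide_right_mono add_mono sum_mono mult_left_le) auto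
  finally show ?thesis .
qed

lemma norm_mmul_le: "cmod (mmul m A B i l) \<le> (\<Sum>t = 1..m. cmod (A i t) * cmod (B t l))"
  unfolding mmul_def by (rule order_trans[OF norm_sum]) (simp add: norm_mult)

lemma norm_mmul_proj_left_le:
  assumes E: "\<forall>i l. 0 \<le> E i l"
  shows "cmod (mmul m (mmul r X (adj X)) (\<lambda>i l. complex_of_real (E i l)) i l)
         \<le> (\<Sum>i' = 1..m. E i' l * ((row_norm_sq r X i + row_norm_sq r X i') / 2))"
proof (intro order_trans[OF norm_mmul_le] sum_mono)
  fix i'
  show "cmod (mmul r X (adj X) i i') * cmod (complex_of_real (E i' l))
        \<le> E i' l * ((row_norm_sq r X i + row_norm_sq r X i') / 2)"
    using E mult_left_mono[OF norm_proj_entry_le, of "E i' l" r X i i'] by (simp add: mult.commute)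
qed

lemma norm_mmul_proj_right_le:
  assumes E: "\<forall>i l. 0 \<le> E i l"
  shows "cmod (mmul n (\<lambda>i l. complex_of_real (E i l)) (mmul r Y (adj Y)) i l)
         \<le> (\<Sum>l' = 1..n. E i l' * ((row_norm_sq r Y l' + row_norm_sq r Y l) / 2))"
proof (intro order_trans[OF norm_mmul_le] sum_mono)
  fix l'
  show "cmod (complex_of_real (E i l')) * cmod (mmul r Y (adj Y) l' l)
        \<le> E i l' * ((row_norm_sq r Y l' + row_norm_sq r Y l) / 2)"
    using E mult_left_mono[OF norm_proj_entry_le, of "E i l'" r Y l' l] by simp
qed

lemma norm_mmul_proj_both_le:
  assumes X: "orthonormal_cols m r X" and Y: "orthonormal_cols n r Y"
    and E: "doubly_substochastic m n E"
  shows "cmod (mmul n (mmul m (mmul r X (adj X)) (\<lambda>i l. complex_of_real (E i l)))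
                  (mmul r Y (adj Y)) i l)
         \<le> (row_norm_sq r X i + row_norm_sq r Y l) / 2"
proof -
  let ?P = "mmul r X (adj X)" and ?Q = "mmul r Y (adj Y)"
  have "cmod (mmul n (mmul m ?P (\<lambda>i l. complex_of_real (E i l))) ?Q i l)
      \<le> (\<Sum>l' = 1..n. (\<Sum>i' = 1..m. cmod (?P i i') * E i' l') * cmod (?Q l' l))"
    using doubly_substochastic_nonneg[OF E]
    by (intro order_trans[OF norm_mmul_le] sum_mono mult_right_mono order_trans[OF norm_mmul_le])
      auto
  also have "\<dots> = (\<Sum>l' = 1..n. \<Sum>i' = 1..m. E i' l' * (cmod (?P i i') * cmod (?Q l' l)))"
    by (simp add: sum_distrib_right mult.assoc mult.commute[of "E _ _"])
  also have "\<dots> \<le> ((\<Sum>i' = 1..m. (cmod (?P i i'))\<^sup>2) + (\<Sum>l' = 1..n. (cmod (?Q l' l))\<^sup>2)) / 2"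
    by (rule doubly_substochastic_bilinear_le[OF E])
  also have "\<dots> = (row_norm_sq r X i + row_norm_sq r Y l) / 2"
    unfolding sum_norm_proj_row_sq[OF X] sum_norm_proj_col_sq[OF Y] ..
  finally show ?thesis .
qed

text \<open>The entrywise bounds for the three terms U U^H E, E V V^H and U U^H E V V^H of \<open>PT\<close>.\<close>
definition PT_entry_bound ::
    "nat \<Rightarrow> nat \<Rightarrow> (nat \<Rightarrow> nat \<Rightarrow> real) \<Rightarrow> (nat \<Rightarrow> real) \<Rightarrow> (nat \<Rightarrow> real) \<Rightarrow> nat \<Rightarrow> nat \<Rightarrow> real" where
  "PT_entry_bound m n E u v i l =
     (\<Sum>i' = 1..m. E i' l * ((u i + u i') / 2)) + (\<Sum>l' = 1..n. E i l' * ((v l' + v l) / 2))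
     + (u i + v l) / 2"

lemma norm_PT_entry_le:
  assumes "orthonormal_cols m r (U a)" and "orthonormal_cols n r (V a)"
    and E: "doubly_substochastic m n E"
  shows "cmod (PT m n r U V (\<lambda>_ i l. complex_of_real (E i l)) a i l)
         \<le> PT_entry_bound m n E (row_norm_sq r (U a)) (row_norm_sq r (V a)) i l"
proof -
  let ?E = "\<lambda>i l. complex_of_real (E i l)"
  let ?P = "mmul r (U a) (adj (U a))" and ?Q = "mmul r (V a) (adj (V a))"
  have "cmod (PT m n r U V (\<lambda>_. ?E) a i l)
      \<le> cmod (mmul m ?P ?E i l) + cmod (mmul n ?E ?Q i l) + cmod (mmul n (mmul m ?P ?E) ?Q i l)"
    unfolding PT_def Let_def
    by (rule order_trans[OF norm_triangle_ineq4 add_right_mono[OF norm_triangle_ineq]])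
  also have "\<dots> \<le> PT_entry_bound m n E (row_norm_sq r (U a)) (row_norm_sq r (V a)) i l"
    unfolding PT_entry_bound_def using E unfolding doubly_substochastic_def
    by (intro add_mono norm_mmul_proj_left_le norm_mmul_proj_right_le
        norm_mmul_proj_both_le assms) auto
  finally show ?thesis .
qed

lemma sum_PT_entry_bound:
  "(\<Sum>a \<in> A. PT_entry_bound m n E (u a) (v a) i l)
   = PT_entry_bound m n E (\<lambda>x. \<Sum>a \<in> A. u a x) (\<lambda>x. \<Sum>a \<in> A. v a x) i l"
  unfolding PT_entry_bound_def
  by (simp add: sum.distrib sum_distrib_left distrib_left sum_divide_distrib[symmetric]
      add_divide_distrib sum.swap[of _ A])

lemma PT_entry_bound_le:
  assumes E: "doubly_substochastic m n E" and "0 \<le> c"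
    and u: "\<forall>x \<in> {1..m}. u x \<le> c" and v: "\<forall>x \<in> {1..n}. v x \<le> c"
    and i: "i \<in> {1..m}" and l: "l \<in> {1..n}"
  shows "PT_entry_bound m n E u v i l \<le> 3 * c"
proof -
  have "(\<Sum>i' = 1..m. E i' l * ((u i + u i') / 2)) \<le> (\<Sum>i' = 1..m. E i' l) * c"
    unfolding sum_distrib_right using doubly_substochastic_nonneg[OF E]
  proof (intro sum_mono mult_left_mono)
    fix i' assume "i' \<in> {1..m}"
    with u i have "u i \<le> c" "u i' \<le> c" by auto
    then show "(u i + u i') / 2 \<le> c" by (simp add: field_simps)
  qed
  also have "\<dots> \<le> c"
    using E \<open>0 \<le> c\<close> unfolding doubly_substochastic_def
    by (intro mult_left_le_one_le sum_nonneg) auto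
  finally have 1: "(\<Sum>i' = 1..m. E i' l * ((u i + u i') / 2)) \<le> c" .
  have "(\<Sum>l' = 1..n. E i l' * ((v l' + v l) / 2)) \<le> (\<Sum>l' = 1..n. E i l') * c"
    unfolding sum_distrib_right using doubly_substochastic_nonneg[OF E]
  proof (intro sum_mono mult_left_mono)
    fix l' assume "l' \<in> {1..n}"
    with v l have "v l' \<le> c" "v l \<le> c" by auto
    then show "(v l' + v l) / 2 \<le> c" by (simp add: field_simps)
  qed
  also have "\<dots> \<le> c"
    using E \<open>0 \<le> c\<close> unfolding doubly_substochastic_def
    by (intro mult_left_le_one_le sum_nonneg) auto
  finally have 2: "(\<Sum>l' = 1..n. E i l' * ((v l' + v l) / 2)) \<le> c" .
  have "u i \<le> c" "v l \<le> c" using u v i l by auto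
  then have "(u i + v l) / 2 \<le> c" by (simp add: field_simps)
  with 1 2 show ?thesis unfolding PT_entry_bound_def by linarith
qed

lemma sum_norm_PT_entry_le:
  assumes U: "\<forall>a \<in> A. orthonormal_cols m r (U a)" and V: "\<forall>a \<in> A. orthonormal_cols n r (V a)"
    and E: "doubly_substochastic m n E"
    and incoh_U: "\<forall>x \<in> {1..m}. (\<Sum>a \<in> A. row_norm_sq r (U a) x) \<le> C"
    and incoh_V: "\<forall>x \<in> {1..n}. (\<Sum>a \<in> A. row_norm_sq r (V a) x) \<le> C"
    and i: "i \<in> {1..m}" and l: "l \<in> {1..n}"
  shows "(\<Sum>a \<in> A. cmod (PT m n r U V (\<lambda>_ i l. complex_of_real (E i l)) a i l)) \<le> 3 * C"
proof -
  have "0 \<le> C"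
    using incoh_U i by (metis (no_types, lifting) order_trans row_norm_sq_nonneg sum_nonneg)
  have "(\<Sum>a \<in> A. cmod (PT m n r U V (\<lambda>_ i l. complex_of_real (E i l)) a i l))
      \<le> (\<Sum>a \<in> A. PT_entry_bound m n E (row_norm_sq r (U a)) (row_norm_sq r (V a)) i l)"
    using U V by (intro sum_mono norm_PT_entry_le E) auto
  also have "\<dots> = PT_entry_bound m n E (\<lambda>x. \<Sum>a \<in> A. row_norm_sq r (U a) x)
                                        (\<lambda>x. \<Sum>a \<in> A. row_norm_sq r (V a) x) i l"
    by (rule sum_PT_entry_bound)
  also have "\<dots> \<le> 3 * C"
    by (rule PT_entry_bound_le[OF E \<open>0 \<le> C\<close> incoh_U incoh_V i l])
  finally show ?thesis .
qed

lemma norm_inner_bd_le: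
  "cmod (inner_bd d m n A B) \<le> (\<Sum>a = 1..d. \<Sum>i = 1..m. \<Sum>l = 1..n. cmod (A a i l) * cmod (B a i l))"
  unfolding inner_bd_def
  by (intro order_trans[OF norm_sum] sum_mono) (simp add: norm_mult)

lemma PT_scale_blocks:
  "PT m n r U V (\<lambda>a i l. f a * W a i l) = (\<lambda>a i l. f a * PT m n r U V W a i l)"
  by (simp add: PT_def Let_def mmul_def sum_distrib_left algebra_simps)

definition hankel_indicator :: "nat \<Rightarrow> nat \<Rightarrow> nat \<Rightarrow> nat \<Rightarrow> real" where
  "hankel_indicator n k i l = (if i \<in> {1..half n} \<and> l \<in> {1..half n} \<and> i + l = k + 1 then 1 else 0)"

lemma hankel_indicator_nonneg: "0 \<le> hankel_indicator n k i l"
  by (simp add: hankel_indicator_def)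

lemma doubly_substochastic_hankel_indicator:
  "doubly_substochastic (half n) (half n) (hankel_indicator n k)"
proof -
  have col: "(\<Sum>i = 1..half n. hankel_indicator n k i l) \<le> 1" for l
  proof -
    have "(\<Sum>i = 1..half n. hankel_indicator n k i l) \<le> (\<Sum>i = 1..half n. if i = k + 1 - l then 1 else 0)"
      by (intro sum_mono) (auto simp: hankel_indicator_def)
    also have "\<dots> \<le> 1" by (simp add: sum.delta)
    finally show ?thesis .
  qed
  have row: "(\<Sum>l = 1..half n. hankel_indicator n k i l) \<le> 1" for i
  proof -
    have "(\<Sum>l = 1..half n. hankel_indicator n k i l) \<le> (\<Sum>l = 1..half n. if l = k + 1 - i then 1 else 0)"
      by (intro sum_mono) (auto simp: hankel_indicator_def)
    also have "\<dots> \<le> 1" by (simp add: sum.delta)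
    finally show ?thesis .
  qed
  with col row hankel_indicator_nonneg show ?thesis
    unfolding doubly_substochastic_def by blast
qed

lemma sum_hankel_indicator:
  "(\<Sum>i = 1..half n. \<Sum>l = 1..half n. hankel_indicator n k i l) = real (wt n k)"
proof -
  let ?A = "{1..half n}"
  have "(\<Sum>i = 1..half n. \<Sum>l = 1..half n. hankel_indicator n k i l)
      = (\<Sum>(i, l) \<in> ?A \<times> ?A. hankel_indicator n k i l)"
    by (simp add: sum.cartesian_product)
  also have "\<dots> = (\<Sum>p \<in> ?A \<times> ?A. of_bool (fst p + snd p = k + 1))"
    by (intro sum.cong refl) (auto simp: hankel_indicator_def)
  also have "\<dots> = real (card (?A \<times> ?A \<inter> {p. fst p + snd p = k + 1}))"
    by simp
  also have "?A \<times> ?A \<inter> {p. fst p + snd p = k + 1} = {(j, l). j \<in> ?A \<and> l \<in> ?A \<and> j + l = k + 1}"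
    by auto
  finally show ?thesis unfolding wt_def .
qed

lemma sum_hankel_indicator_mult_le:
  assumes "\<forall>i \<in> {1..half n}. \<forall>l \<in> {1..half n}. f i l \<le> K"
  shows "(\<Sum>i = 1..half n. \<Sum>l = 1..half n. hankel_indicator n k i l * f i l) \<le> K * real (wt n k)"
proof -
  have "(\<Sum>i = 1..half n. \<Sum>l = 1..half n. hankel_indicator n k i l * f i l)
      \<le> (\<Sum>i = 1..half n. \<Sum>l = 1..half n. K * hankel_indicator n k i l)"
  proof (intro sum_mono)
    fix i l assume "i \<in> {1..half n}" "l \<in> {1..half n}"
    with assms have "f i l \<le> K" by blast
    then show "hankel_indicator n k i l * f i l \<le> K * hankel_indicator n k i l"
      by (metis mult.commute mult_left_mono hankel_indicator_nonneg)
  qed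
  also have "\<dots> = K * real (wt n k)"
    by (simp only: sum_distrib_left[symmetric] sum_hankel_indicator)
  finally show ?thesis .
qed

lemma wt_pos:
  assumes "odd n" and k: "k \<in> {1..n}"
  shows "0 < wt n k"
proof -
  let ?S = "{(j, l). j \<in> {1..half n} \<and> l \<in> {1..half n} \<and> j + l = k + 1}"
  have "finite ?S"
    by (rule finite_subset[of _ "{1..half n} \<times> {1..half n}"]) auto
  moreover have "2 * half n = n + 1"
    unfolding half_def using \<open>odd n\<close> by presburger
  then have "(if k \<le> half n then (1, k) else (k + 1 - half n, half n)) \<in> ?S"
    using k by auto
  ultimately show ?thesis
    unfolding wt_def by (auto simp: card_gt_0_iff)
qed

lemma Ghat_eq_hankel_indicator:
  "Ghat d n j k = (\<lambda>a i l. (DFT d a j * complex_of_real (1 / sqrt (real (wt n k))))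
                            * complex_of_real (hankel_indicator n k i l))"
  by (simp add: Ghat_def Gmat_def hankel_indicator_def fun_eq_iff)

lemma norm_DFT: "cmod (DFT d a j) = 1 / sqrt (real d)"
  by (simp add: DFT_def norm_divide)

lemma norm_inner_PT_Ghat_le:
  "cmod (inner_bd d (half n) (half n) (PT (half n) (half n) r U V (Ghat d n j k)) (Ghat d n \<alpha> \<beta>))
   \<le> (\<Sum>i = 1..half n. \<Sum>l = 1..half n. hankel_indicator n \<beta> i l
        * (\<Sum>a = 1..d. cmod (PT (half n) (half n) r U V
                                (\<lambda>_ i l. complex_of_real (hankel_indicator n k i l)) a i l)))
     / (real d * sqrt (real (wt n k)) * sqrt (real (wt n \<beta>)))"
proof -
  let ?h = "half n" and ?H = "hankel_indicator n"
  let ?T = "PT ?h ?h r U V (\<lambda>_ i l. complex_of_real (?H k i l))"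
  define C where "C = 1 / (real d * sqrt (real (wt n k)) * sqrt (real (wt n \<beta>)))"
  have PT_Ghat: "PT ?h ?h r U V (Ghat d n j k)
      = (\<lambda>a i l. (DFT d a j * complex_of_real (1 / sqrt (real (wt n k)))) * ?T a i l)"
    unfolding Ghat_eq_hankel_indicator by (rule PT_scale_blocks)
  have entry: "cmod (PT ?h ?h r U V (Ghat d n j k) a i l) * cmod (Ghat d n \<alpha> \<beta> a i l)
      = C * (?H \<beta> i l * cmod (?T a i l))" for a i l
    unfolding PT_Ghat C_def
    by (simp add: Ghat_eq_hankel_indicator norm_mult norm_divide norm_DFT
        hankel_indicator_nonneg field_simps)
  have "cmod (inner_bd d ?h ?h (PT ?h ?h r U V (Ghat d n j k)) (Ghat d n \<alpha> \<beta>))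
      \<le> (\<Sum>a = 1..d. \<Sum>i = 1..?h. \<Sum>l = 1..?h. C * (?H \<beta> i l * cmod (?T a i l)))"
    using norm_inner_bd_le[of d ?h ?h "PT ?h ?h r U V (Ghat d n j k)" "Ghat d n \<alpha> \<beta>"]
    unfolding entry .
  also have "\<dots> = C * (\<Sum>i = 1..?h. \<Sum>l = 1..?h. ?H \<beta> i l * (\<Sum>a = 1..d. cmod (?T a i l)))"
    unfolding sum_distrib_left
    by (subst sum.swap) (rule sum.cong[OF refl], rule sum.swap)
  finally show ?thesis
    by (simp add: C_def)
qed

theorem lemma6p3:
  fixes d n r :: nat and mu0 :: real
    and Z U V :: bdmat and \<sigma> :: "nat \<Rightarrow> nat \<Rightarrow> real"
    and j k \<alpha> \<beta> :: nat
  assumes "d \<ge> 1" and "odd n"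
    and U_orth: "\<forall>a \<in> {1..d}. \<forall>s \<in> {1..r}. \<forall>t \<in> {1..r}.
        (\<Sum>i = 1..half n. cnj (U a i s) * U a i t) = (if s = t then 1 else 0)"
    and V_orth: "\<forall>a \<in> {1..d}. \<forall>s \<in> {1..r}. \<forall>t \<in> {1..r}.
        (\<Sum>i = 1..half n. cnj (V a i s) * V a i t) = (if s = t then 1 else 0)"
    and sv_pos: "\<forall>a \<in> {1..d}. \<forall>t \<in> {1..r}. \<sigma> a t > 0"
    and svd: "\<forall>a \<in> {1..d}. \<forall>i \<in> {1..half n}. \<forall>l \<in> {1..half n}.
        Z a i l = (\<Sum>t = 1..r. U a i t * complex_of_real (\<sigma> a t) * cnj (V a l t))"
    and incoh_U: "\<forall>i \<in> {1..half n}.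
        (1 / real d) * (\<Sum>a = 1..d. \<Sum>t = 1..r. (cmod (U a i t))\<^sup>2) \<le> mu0 * real r / real n"
    and incoh_V: "\<forall>i \<in> {1..half n}.
        (1 / real d) * (\<Sum>a = 1..d. \<Sum>t = 1..r. (cmod (V a i t))\<^sup>2) \<le> mu0 * real r / real n"
    and "j \<in> {1..d}" and "k \<in> {1..n}" and "\<alpha> \<in> {1..d}" and "\<beta> \<in> {1..n}"
  shows "sqrt (real (wt n k) / real (wt n \<beta>))
         * cmod (inner_bd d (half n) (half n)
                   (PT (half n) (half n) r U V (Ghat d n j k)) (Ghat d n \<alpha> \<beta>))
         \<le> 3 * mu0 * real r / real n"
proof -
  let ?h = "half n" and ?H = "hankel_indicator n"
  let ?T = "PT ?h ?h r U V (\<lambda>_ i l. complex_of_real (?H k i l))"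
  let ?S = "\<Sum>i = 1..?h. \<Sum>l = 1..?h. ?H \<beta> i l * (\<Sum>a = 1..d. cmod (?T a i l))"
  define c where "c = mu0 * real r / real n"
  have "\<forall>i \<in> {1..?h}. \<forall>l \<in> {1..?h}. (\<Sum>a = 1..d. cmod (?T a i l)) \<le> 3 * (real d * c)"
    using doubly_substochastic_hankel_indicator[of n k] U_orth V_orth incoh_U incoh_V \<open>d \<ge> 1\<close>
    by (intro ballI sum_norm_PT_entry_le)
      (auto simp: orthonormal_cols_def row_norm_sq_def c_def divide_le_eq mult.commute)
  then have hankel_sum_le: "?S \<le> 3 * (real d * c) * real (wt n \<beta>)"
    by (rule sum_hankel_indicator_mult_le)
  have "0 < wt n k" "0 < wt n \<beta>"
    using wt_pos \<open>odd n\<close> \<open>k \<in> {1..n}\<close> \<open>\<beta> \<in> {1..n}\<close> by auto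
  let ?ratio = "sqrt (real (wt n k) / real (wt n \<beta>))"
  have "?ratio * cmod (inner_bd d ?h ?h (PT ?h ?h r U V (Ghat d n j k)) (Ghat d n \<alpha> \<beta>))
      \<le> ?ratio * (?S / (real d * sqrt (real (wt n k)) * sqrt (real (wt n \<beta>))))"
    by (intro mult_left_mono norm_inner_PT_Ghat_le) simp
  also have "\<dots> = ?S / (real d * real (wt n \<beta>))"
    using \<open>0 < wt n k\<close> \<open>0 < wt n \<beta>\<close> by (simp add: real_sqrt_divide field_simps)
  also have "\<dots> \<le> 3 * c"
    using hankel_sum_le \<open>d \<ge> 1\<close> \<open>0 < wt n \<beta>\<close> by (simp add: divide_le_eq mult_ac)
  finally show ?thesis
    unfolding c_def by simp
qed

end
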